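(* Let $\{(Y_i,X_i^T)\}_{i=1}^n$ be i.i.d. copies of $(Y,X^T)$ (law possibly depending on $n$) with $X$ supported on $\mathcal{X}$, $p_{1:k}=(p_1,\dots,p_k)^T$ functions on $\mathcal{X}$ ($k\ge2$, possibly depending on $n$), $\xi_k=\sup_{x\in\mathcal{X}}\|p_{1:k}(x)\|_2$, $\bar\beta=E[p_{1:k}(X)p_{1:k}(X)^T]^{-1}E[p_{1:k}(X)Y]$, $\omega=p_{1:k}(X)(Y-p_{1:k}(X)^T\bar\beta)$, and $\eta_1,\dots,\eta_n$ i.i.d. Rademacher variables independent of the data. Suppose that for constants $b>0$, $q\in[4,\infty)$ and finite constants $B_n\ge1$: (a) the eigenvalues of $E[\omega\omega^T]$ and $E[p_{1:k}(X)p_{1:k}(X)^T]$ are bounded above and bounded below away from $0$ uniformly over $n$; (b)(i) $E[Y^2]<\infty$; (ii) for every $j=1,\dots,k$ and $\kappa=1,2$: $E[|(E[\omega\omega^T]^{-1/2})_j\omega|^2]\ge b$, $E[|(E[\omega\omega^T]^{-1/2})_j\omega|^{2+\kappa}]\le B_n^\kappa$, and $E[\|E[\omega\omega^T]^{-1/2}\omega\|_\infty^q]\le B_n^q$; (iii) $B_n^2\log^7(nk)/n=o(1)$ and $B_n^2\log^3(nk)/n^{1-2/q}=o(1)$. Then $\max\{\|E_n[(\eta+1)\omega]\|_2,\|E_n[\omega]\|_2\}=O_P\bigl(\sqrt{\xi_k^2/n}\bigr)$.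
   Context: $E_n$ is the sample mean over observations, e.g. $E_n[(\eta+1)\omega]=\frac1n\sum_i(\eta_i+1)\omega_i$. $(M)_j$ denotes the $j$-th row of $M$; $\|\cdot\|_2$ is the Euclidean norm. *)

theory Defs
  imports "HOL-Probability.Probability" "Jordan_Normal_Form.Char_Poly"
    "Jordan_Normal_Form.Gauss_Jordan_Elimination"
begin

text \<open>The law of a generic copy (Y, X) is a probability measure L on
  real \<times> 'x; p j (j < k) are the basis functions p_1..p_k (0-indexed).\<close>

definition pvec :: "nat \<Rightarrow> (nat \<Rightarrow> 'x \<Rightarrow> real) \<Rightarrow> 'x \<Rightarrow> real vec" where
  "pvec k p x = vec k (\<lambda>j. p j x)"

definition gram :: "(real \<times> 'x) measure \<Rightarrow> nat \<Rightarrow> (nat \<Rightarrow> 'x \<Rightarrow> real) \<Rightarrow> real mat" where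
  "gram L k p = mat k k (\<lambda>(j,l). \<integral>z. p j (snd z) * p l (snd z) \<partial>L)"

definition betabar :: "(real \<times> 'x) measure \<Rightarrow> nat \<Rightarrow> (nat \<Rightarrow> 'x \<Rightarrow> real) \<Rightarrow> real vec" where
  "betabar L k p = the (mat_inverse (gram L k p)) *\<^sub>v vec k (\<lambda>j. \<integral>z. p j (snd z) * fst z \<partial>L)"

definition omega :: "(real \<times> 'x) measure \<Rightarrow> nat \<Rightarrow> (nat \<Rightarrow> 'x \<Rightarrow> real) \<Rightarrow> real \<times> 'x \<Rightarrow> real vec" where
  "omega L k p z = (fst z - pvec k p (snd z) \<bullet> betabar L k p) \<cdot>\<^sub>v pvec k p (snd z)"

definition Omega :: "(real \<times> 'x) measure \<Rightarrow> nat \<Rightarrow> (nat \<Rightarrow> 'x \<Rightarrow> real) \<Rightarrow> real mat" where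
  "Omega L k p = mat k k (\<lambda>(j,l). \<integral>z. vec_index (omega L k p z) j * vec_index (omega L k p z) l \<partial>L)"

definition inv_sqrt_mat :: "real mat \<Rightarrow> real mat" where
  "inv_sqrt_mat A = (THE S. S \<in> carrier_mat (dim_row A) (dim_row A) \<and> transpose_mat S = S
     \<and> (\<forall>e. eigenvalue S e \<longrightarrow> e > 0) \<and> S * S * A = 1\<^sub>m (dim_row A))"

definition vnorm2 :: "real vec \<Rightarrow> real" where
  "vnorm2 v = sqrt (\<Sum>j<dim_vec v. (vec_index v j)\<^sup>2)"

definition xi :: "'x set \<Rightarrow> nat \<Rightarrow> (nat \<Rightarrow> 'x \<Rightarrow> real) \<Rightarrow> ereal" where
  "xi Xs k p = (SUP x\<in>Xs. ereal (vnorm2 (pvec k p x)))"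

end

theory Submission
  imports Defs "Jordan_Normal_Form.Schur_Decomposition"
begin

(* The bound is a Chebyshev inequality. The normal equations make the scores omega_i centred,
   so by independence E ||sum_i omega_i||^2 = n tr Omega, and since |eta_i + 1| <= 2 almost
   surely, E ||sum_i (eta_i + 1) omega_i||^2 <= 4 n tr Omega. On the other hand
   xi_k^2 >= E ||p(X)||^2 = tr G, and the eigenvalue bounds c <= lambda <= c' of (a) give
   tr Omega / tr G <= c' / c. Markov's inequality for the sum of the two squared norms
   therefore bounds the probability that sqrt n times the larger norm exceeds C xi_k by
   5 c' / (c C^2), uniformly in n. *)

section \<open>Traces and eigenvalues of matrices\<close>

definition trace_mat :: "'a::comm_ring_1 mat \<Rightarrow> 'a" where
  "trace_mat A = (\<Sum>i<dim_row A. A $$ (i, i))"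

lemma trace_mat_mult_comm:
  fixes A B :: "'a::comm_ring_1 mat"
  assumes A: "A \<in> carrier_mat n m" and B: "B \<in> carrier_mat m n"
  shows "trace_mat (A * B) = trace_mat (B * A)"
proof -
  have "trace_mat (A * B) = (\<Sum>i<n. \<Sum>j<m. A $$ (i, j) * B $$ (j, i))"
    using A B by (auto simp: trace_mat_def scalar_prod_def atLeast0LessThan intro!: sum.cong)
  also have "\<dots> = (\<Sum>j<m. \<Sum>i<n. B $$ (j, i) * A $$ (i, j))"
    by (subst sum.swap) (simp add: mult.commute)
  also have "\<dots> = trace_mat (B * A)"
    using A B by (auto simp: trace_mat_def scalar_prod_def atLeast0LessThan intro!: sum.cong)
  finally show ?thesis .
qed

lemma trace_mat_similar_mat_wit:
  fixes A B :: "'a::comm_ring_1 mat"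
  assumes A: "A \<in> carrier_mat n n" and sim: "similar_mat_wit A B P Q"
  shows "trace_mat A = trace_mat B"
proof -
  from similar_mat_witD2[OF A sim]
  have B: "B \<in> carrier_mat n n" and P: "P \<in> carrier_mat n n" and Q: "Q \<in> carrier_mat n n"
    and QP: "Q * P = 1\<^sub>m n" and eq: "A = P * B * Q" by blast+
  have "trace_mat A = trace_mat (Q * (P * B))"
    using eq trace_mat_mult_comm[OF mult_carrier_mat[OF P B] Q] by simp
  also have "Q * (P * B) = B"
    by (simp add: assoc_mult_mat[symmetric, OF Q P B] QP left_mult_one_mat[OF B])
  finally show ?thesis .
qed

lemma trace_mat_eq_sum_list_diag_mat: "trace_mat A = sum_list (diag_mat A)"
  by (simp add: trace_mat_def diag_mat_def sum_list_sum_nth atLeast0LessThan)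

lemma eigenvalue_of_real_symmetric_is_real:
  fixes A :: "real mat"
  assumes A: "A \<in> carrier_mat n n" and sym: "transpose_mat A = A"
    and ev: "eigenvalue (map_mat complex_of_real A) a"
  shows "Im a = 0"
proof -
  let ?A = "map_mat complex_of_real A"
  from ev obtain v where v: "v \<in> carrier_vec n" "v \<noteq> 0\<^sub>v n" "?A *\<^sub>v v = a \<cdot>\<^sub>v v"
    using A unfolding eigenvalue_def eigenvector_def by auto
  have symmetric: "A $$ (i, j) = A $$ (j, i)" if "i < n" "j < n" for i j
  proof -
    have "A $$ (i, j) = transpose_mat A $$ (i, j)" using sym by simp
    also have "\<dots> = A $$ (j, i)" using A that by simp
    finally show ?thesis .
  qed
  \<comment> \<open>s = v* A v equals a |v|^2, and it is its own conjugate since A is real symmetric.\<close>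
  define s where "s = (\<Sum>i<n. cnj (v $ i) * (?A *\<^sub>v v) $ i)"
  define t where "t = (\<Sum>i<n. cnj (v $ i) * v $ i)"
  have s_eigen: "s = a * t"
    unfolding s_def t_def using v by (simp add: sum_distrib_left mult.commute mult.left_commute)
  have s_form: "s = (\<Sum>i<n. \<Sum>j<n. cnj (v $ i) * of_real (A $$ (i, j)) * v $ j)"
    unfolding s_def using v(1) A
    by (auto simp: scalar_prod_def atLeast0LessThan sum_distrib_left mult.assoc intro!: sum.cong)
  have "cnj s = (\<Sum>i<n. \<Sum>j<n. v $ i * of_real (A $$ (i, j)) * cnj (v $ j))"
    unfolding s_form by (simp add: cnj_sum)
  also have "\<dots> = (\<Sum>j<n. \<Sum>i<n. v $ i * of_real (A $$ (i, j)) * cnj (v $ j))"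
    by (rule sum.swap)
  also have "\<dots> = s"
    unfolding s_form using symmetric by (auto intro!: sum.cong simp: mult.commute mult.left_commute)
  finally have "Im s = 0" by (metis cnj.simps(2) neg_equal_zero)
  have t_real: "t = of_real (\<Sum>i<n. (cmod (v $ i))\<^sup>2)"
    unfolding t_def by (simp add: complex_norm_square[symmetric] mult.commute del: of_real_power)
  obtain i where "i < n" "v $ i \<noteq> 0" using v by (metis eq_vecI carrier_vecD index_zero_vec)
  then have "(\<Sum>i<n. (cmod (v $ i))\<^sup>2) > 0" by (intro sum_pos2[of _ i]) auto
  with \<open>Im s = 0\<close> s_eigen t_real show ?thesis by simp
qed

lemma trace_mat_symmetric_eq_sum_eigenvalues:
  fixes A :: "real mat"
  assumes A: "A \<in> carrier_mat n n" and sym: "transpose_mat A = A"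
  shows "\<exists>es. length es = n \<and> (\<forall>e \<in> set es. eigenvalue A e) \<and> trace_mat A = sum_list es"
proof -
  let ?A = "map_mat complex_of_real A"
  have AC: "?A \<in> carrier_mat n n" using A by simp
  obtain as where cp: "char_poly ?A = (\<Prod>a\<leftarrow>as. [:- a, 1:])" and len: "length as = n"
    using char_poly_factorized[OF AC] by blast
  obtain B P Q where "schur_decomposition ?A as = (B, P, Q)"
    by (cases "schur_decomposition ?A as") auto
  from schur_decomposition[OF AC cp this]
  have sim: "similar_mat_wit ?A B P Q" and diag: "diag_mat B = as" by auto
  have "complex_of_real (trace_mat A) = trace_mat ?A"
    using A by (simp add: trace_mat_def)
  also have "\<dots> = trace_mat B" by (rule trace_mat_similar_mat_wit[OF AC sim])
  also have "\<dots> = sum_list as" by (simp add: trace_mat_eq_sum_list_diag_mat diag)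
  finally have "trace_mat A = Re (sum_list as)"
    by (metis Re_complex_of_real)
  also have "Re (sum_list as) = sum_list (map Re as)" by (induct as) auto
  finally have tr: "trace_mat A = sum_list (map Re as)" .
  have "eigenvalue A (Re a)" if a: "a \<in> set as" for a
  proof -
    have "poly (char_poly ?A) a = 0"
      unfolding cp poly_prod_list using a by (simp add: prod_list_zero_iff o_def)
    then have "eigenvalue ?A a" using eigenvalue_root_char_poly[OF AC] by simp
    then have "Im a = 0" by (rule eigenvalue_of_real_symmetric_is_real[OF A sym])
    then obtain r where r: "a = complex_of_real r" by (metis complex_is_Real_iff of_real_Re)
    have "complex_of_real (poly (char_poly A) r) = poly (char_poly ?A) a"
      unfolding r of_real_hom.char_poly_hom[OF A] by (simp add: of_real_hom.poly_map_poly)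
    with \<open>poly (char_poly ?A) a = 0\<close> have "poly (char_poly A) r = 0" by simp
    then show ?thesis using eigenvalue_root_char_poly[OF A] r by simp
  qed
  then show ?thesis using len tr by (intro exI[of _ "map Re as"]) auto
qed

lemma trace_mat_symmetric_bounds:
  fixes A :: "real mat"
  assumes A: "A \<in> carrier_mat n n" and sym: "transpose_mat A = A"
    and eig: "\<And>e. eigenvalue A e \<Longrightarrow> c \<le> e \<and> e \<le> C"
  shows "real n * c \<le> trace_mat A" and "trace_mat A \<le> real n * C"
proof -
  obtain es where len: "length es = n" and ev: "\<forall>e \<in> set es. eigenvalue A e"
    and tr: "trace_mat A = sum_list es"
    using trace_mat_symmetric_eq_sum_eigenvalues[OF A sym] by blast
  have "sum_list (map (\<lambda>_. c) es) \<le> sum_list (map (\<lambda>e. e) es)"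
    by (rule sum_list_mono) (use ev eig in auto)
  then show "real n * c \<le> trace_mat A" using tr len by (simp add: sum_list_triv)
  have "sum_list (map (\<lambda>e. e) es) \<le> sum_list (map (\<lambda>_. C) es)"
    by (rule sum_list_mono) (use ev eig in auto)
  then show "trace_mat A \<le> real n * C" using tr len by (simp add: sum_list_triv)
qed

lemma mat_inverse_if_not_eigenvalue_0:
  fixes A :: "'a::field mat"
  assumes A: "A \<in> carrier_mat n n" and ne: "\<not> eigenvalue A 0"
  obtains B where "mat_inverse A = Some B" and "A * B = 1\<^sub>m n" and "B \<in> carrier_mat n n"
proof -
  have "char_matrix A 0 = A"
    using A by (auto simp: char_matrix_def intro!: eq_matI)
  then have "det A \<noteq> 0"
    using ne eigenvalue_det[OF A, of 0] by simp
  with det_non_zero_imp_unit[OF A] have "A \<in> Units (ring_mat TYPE('a) n ())" .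
  then obtain B where "mat_inverse A = Some B"
    using mat_inverse(1)[OF A, of "()"] by (cases "mat_inverse A") auto
  with mat_inverse(2)[OF A this] that show ?thesis by blast
qed

section \<open>Independent random variables\<close>

lemma integrable_mult_if_square_integrable:
  fixes f g :: "'a \<Rightarrow> real"
  assumes "f \<in> borel_measurable M" "g \<in> borel_measurable M"
    and "integrable M (\<lambda>x. (f x)\<^sup>2)" "integrable M (\<lambda>x. (g x)\<^sup>2)"
  shows "integrable M (\<lambda>x. f x * g x)"
proof (rule Bochner_Integration.integrable_bound)
  show "integrable M (\<lambda>x. (f x)\<^sup>2 + (g x)\<^sup>2)" using assms by simp
  have "\<bar>a * b\<bar> \<le> a\<^sup>2 + b\<^sup>2" for a b :: real
  proof -
    have "2 * \<bar>a\<bar> * \<bar>b\<bar> \<le> a\<^sup>2 + b\<^sup>2" using sum_squares_bound[of "\<bar>a\<bar>" "\<bar>b\<bar>"] by simp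
    moreover have "0 \<le> \<bar>a\<bar> * \<bar>b\<bar>" by simp
    ultimately show ?thesis unfolding abs_mult by linarith
  qed
  then show "AE x in M. norm (f x * g x) \<le> norm ((f x)\<^sup>2 + (g x)\<^sup>2)" by simp
qed (use assms in measurable)

lemma (in prob_space) AE_rademacher:
  fixes e :: "'a \<Rightarrow> real"
  assumes e: "e \<in> borel_measurable M"
    and prob_1: "prob {w \<in> space M. e w = 1} = 1/2"
    and prob_minus_1: "prob {w \<in> space M. e w = -1} = 1/2"
  shows "AE w in M. e w = 1 \<or> e w = -1"
proof -
  have events: "{w \<in> space M. e w = a} \<in> events" for a
    using e by measurable
  have "prob ({w \<in> space M. e w = 1} \<union> {w \<in> space M. e w = -1}) = 1"
    using finite_measure_Union[OF events[of 1] events[of "-1"]] prob_1 prob_minus_1 by force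
  then have "AE w in M. w \<in> {w \<in> space M. e w = 1} \<union> {w \<in> space M. e w = -1}"
    by (rule AE_prob_1)
  then show ?thesis by eventually_elim auto
qed

lemma (in prob_space) indep_var_compose_indep_vars:
  assumes indep: "indep_vars (\<lambda>_. N) Z I" and i: "i \<in> I" and l: "l \<in> I" "i \<noteq> l"
    and h: "h \<in> borel_measurable N"
  shows "indep_var borel (\<lambda>w. h (Z i w)) borel (\<lambda>w. h (Z l w))"
proof -
  have hm: "(\<lambda>f. h (f j)) \<in> borel_measurable (PiM {j} (\<lambda>_. N))" for j
    by (rule measurable_compose[OF measurable_component_singleton[of j "{j}" "\<lambda>_. N"] h]) simp
  have "indep_var (PiM {i} (\<lambda>_. N)) (\<lambda>w. restrict (\<lambda>i. Z i w) {i})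
      (PiM {l} (\<lambda>_. N)) (\<lambda>w. restrict (\<lambda>i. Z i w) {l})"
    by (rule indep_var_restrict[OF indep]) (use i l in auto)
  from indep_var_compose[OF this hm hm] show ?thesis by (simp add: comp_def)
qed

lemma (in prob_space) has_bochner_integral_square_sum_pairwise_indep:
  fixes Z :: "'i \<Rightarrow> 'a \<Rightarrow> real"
  assumes fin: "finite I"
    and int: "\<And>i. i \<in> I \<Longrightarrow> integrable M (Z i)"
    and int2: "\<And>i. i \<in> I \<Longrightarrow> integrable M (\<lambda>w. (Z i w)\<^sup>2)"
    and mean: "\<And>i. i \<in> I \<Longrightarrow> expectation (Z i) = 0"
    and indep: "\<And>i l. i \<in> I \<Longrightarrow> l \<in> I \<Longrightarrow> i \<noteq> l \<Longrightarrow> indep_var borel (Z i) borel (Z l)"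
  shows "has_bochner_integral M (\<lambda>w. (\<Sum>i\<in>I. Z i w)\<^sup>2) (\<Sum>i\<in>I. expectation (\<lambda>w. (Z i w)\<^sup>2))"
proof -
  have cross: "has_bochner_integral M (\<lambda>w. Z i w * Z l w)
      (if i = l then expectation (\<lambda>w. (Z i w)\<^sup>2) else 0)" if "i \<in> I" "l \<in> I" for i l
  proof (cases "i = l")
    case True
    then show ?thesis
      using int2[OF that(1)] by (simp add: has_bochner_integral_iff power2_eq_square)
  next
    case False
    with indep[OF that] int that mean show ?thesis
      by (simp add: has_bochner_integral_iff indep_var_integrable indep_var_lebesgue_integral)
  qed
  have "has_bochner_integral M (\<lambda>w. \<Sum>i\<in>I. \<Sum>l\<in>I. Z i w * Z l w)
      (\<Sum>i\<in>I. \<Sum>l\<in>I. if i = l then expectation (\<lambda>w. (Z i w)\<^sup>2) else 0)"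
    using cross by (intro has_bochner_integral_sum) auto
  then show ?thesis
    using fin by (simp add: power2_eq_square sum_product)
qed

section \<open>Population least-squares residuals\<close>

lemma gram_carrier_mat: "gram L k p \<in> carrier_mat k k"
  by (simp add: gram_def)

lemma transpose_gram: "transpose_mat (gram L k p) = gram L k p"
  by (auto simp: gram_def mult.commute intro!: eq_matI)

lemma trace_mat_gram: "trace_mat (gram L k p) = (\<Sum>j<k. \<integral>z. (p j (snd z))\<^sup>2 \<partial>L)"
  by (simp add: trace_mat_def gram_def power2_eq_square)

lemma Omega_carrier_mat: "Omega L k p \<in> carrier_mat k k"
  by (simp add: Omega_def)

lemma transpose_Omega: "transpose_mat (Omega L k p) = Omega L k p"
  by (auto simp: Omega_def mult.commute intro!: eq_matI)

lemma trace_mat_Omega: "trace_mat (Omega L k p) = (\<Sum>j<k. \<integral>z. (omega L k p z $ j)\<^sup>2 \<partial>L)"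
  by (simp add: trace_mat_def Omega_def power2_eq_square)

lemma trace_mat_Omega_nonneg: "0 \<le> trace_mat (Omega L k p)"
  unfolding trace_mat_Omega by (intro sum_nonneg integral_nonneg_AE) auto

lemma trace_mat_Omega_divide_gram_le:
  assumes k: "0 < k" and c: "0 < c"
    and eig: "\<And>e. eigenvalue (Omega L k p) e \<or> eigenvalue (gram L k p) e \<Longrightarrow> c \<le> e \<and> e \<le> c'"
  shows "0 < trace_mat (gram L k p)"
    and "trace_mat (Omega L k p) / trace_mat (gram L k p) \<le> c' / c"
proof -
  have Omega: "trace_mat (Omega L k p) \<le> real k * c'"
    using trace_mat_symmetric_bounds(2)[OF Omega_carrier_mat transpose_Omega] eig by blast
  have gram: "real k * c \<le> trace_mat (gram L k p)"
    using trace_mat_symmetric_bounds(1)[OF gram_carrier_mat transpose_gram] eig by blast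
  have kc: "0 < real k * c" using k c by simp
  then show "0 < trace_mat (gram L k p)" using gram by linarith
  have "trace_mat (Omega L k p) / trace_mat (gram L k p) \<le> (real k * c') / (real k * c)"
    using Omega gram kc trace_mat_Omega_nonneg[of L k p] by (intro frac_le) auto
  also have "\<dots> = c' / c" using k by simp
  finally show "trace_mat (Omega L k p) / trace_mat (gram L k p) \<le> c' / c" .
qed

locale series_regression =
  fixes L :: "(real \<times> 'x) measure" and Sx :: "'x measure"
    and k :: nat and p :: "nat \<Rightarrow> 'x \<Rightarrow> real"
  assumes prob_space_L: "prob_space L"
    and sets_L: "sets L = sets (borel \<Otimes>\<^sub>M Sx)"
    and p_measurable: "\<And>j. j < k \<Longrightarrow> p j \<in> borel_measurable Sx"
    and integrable_p_mult_p:
      "\<And>j l. j < k \<Longrightarrow> l < k \<Longrightarrow> integrable L (\<lambda>z. p j (snd z) * p l (snd z))"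
    and integrable_Y_square: "integrable L (\<lambda>z. (fst z)\<^sup>2)"
    and integrable_omega_square: "\<And>j. j < k \<Longrightarrow> integrable L (\<lambda>z. (omega L k p z $ j)\<^sup>2)"
    and gram_not_singular: "\<not> eigenvalue (gram L k p) 0"
begin

lemma borel_measurable_L: "borel_measurable L = borel_measurable (borel \<Otimes>\<^sub>M Sx)"
  using sets_L by (rule measurable_cong_sets) simp

lemma p_snd_measurable: "j < k \<Longrightarrow> (\<lambda>z. p j (snd z)) \<in> borel_measurable (borel \<Otimes>\<^sub>M Sx)"
  using p_measurable by measurable

lemma normal_equations:
  "dim_vec (betabar L k p) = k"
  "gram L k p *\<^sub>v betabar L k p = vec k (\<lambda>j. \<integral>z. p j (snd z) * fst z \<partial>L)"
proof -
  obtain G where G: "mat_inverse (gram L k p) = Some G" "gram L k p * G = 1\<^sub>m k"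
    "G \<in> carrier_mat k k"
    using mat_inverse_if_not_eigenvalue_0[OF gram_carrier_mat gram_not_singular] by blast
  let ?b = "vec k (\<lambda>j. \<integral>z. p j (snd z) * fst z \<partial>L)"
  have beta: "betabar L k p = G *\<^sub>v ?b" unfolding betabar_def G by simp
  then show "dim_vec (betabar L k p) = k" using G(3) by simp
  have "gram L k p *\<^sub>v (G *\<^sub>v ?b) = (gram L k p * G) *\<^sub>v ?b"
    by (rule assoc_mult_mat_vec[symmetric, OF gram_carrier_mat G(3)]) simp
  then show "gram L k p *\<^sub>v betabar L k p = ?b" using beta G(2) by simp
qed

lemma omega_index:
  "j < k \<Longrightarrow> omega L k p z $ j =
     p j (snd z) * fst z - (\<Sum>l<k. p j (snd z) * p l (snd z) * betabar L k p $ l)"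
  using normal_equations(1) unfolding omega_def pvec_def scalar_prod_def
  by (simp add: atLeast0LessThan sum_distrib_left algebra_simps)

lemma omega_index_measurable:
  assumes j: "j < k"
  shows "(\<lambda>z. omega L k p z $ j) \<in> borel_measurable (borel \<Otimes>\<^sub>M Sx)"
proof -
  have "(\<lambda>z. p j (snd z) * fst z - (\<Sum>l<k. p j (snd z) * p l (snd z) * betabar L k p $ l))
      \<in> borel_measurable (borel \<Otimes>\<^sub>M Sx)"
    using p_snd_measurable j
    by (intro borel_measurable_diff borel_measurable_times borel_measurable_sum
        borel_measurable_const measurable_fst'' measurable_ident_sets) auto
  then show ?thesis by (simp add: omega_index[OF j])
qed

lemma integrable_p_mult_Y:
  assumes j: "j < k"
  shows "integrable L (\<lambda>z. p j (snd z) * fst z)"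
proof (rule integrable_mult_if_square_integrable)
  show "(\<lambda>z. p j (snd z)) \<in> borel_measurable L"
    using p_snd_measurable[OF j] by (simp add: borel_measurable_L)
  show "(\<lambda>z. fst z) \<in> borel_measurable L"
    unfolding borel_measurable_L by measurable
  show "integrable L (\<lambda>z. (p j (snd z))\<^sup>2)"
    using integrable_p_mult_p[OF j j] by (simp add: power2_eq_square)
qed (rule integrable_Y_square)

lemma integrable_omega:
  assumes j: "j < k"
  shows "integrable L (\<lambda>z. omega L k p z $ j)"
proof -
  interpret prob_space L by (rule prob_space_L)
  show ?thesis
  proof (rule square_integrable_imp_integrable)
    show "(\<lambda>z. omega L k p z $ j) \<in> borel_measurable L"
      using omega_index_measurable[OF j] by (simp add: borel_measurable_L)
  qed (rule integrable_omega_square[OF j])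
qed

lemma integral_omega_eq_0:
  assumes j: "j < k"
  shows "(\<integral>z. omega L k p z $ j \<partial>L) = 0"
proof -
  let ?b = "betabar L k p"
  have int: "integrable L (\<lambda>z. p j (snd z) * p l (snd z) * ?b $ l)" if "l < k" for l
    using integrable_p_mult_p[OF j that] by simp
  have "(\<integral>z. omega L k p z $ j \<partial>L) =
      (\<integral>z. p j (snd z) * fst z \<partial>L) - (\<integral>z. (\<Sum>l<k. p j (snd z) * p l (snd z) * ?b $ l) \<partial>L)"
    unfolding omega_index[OF j]
    by (rule Bochner_Integration.integral_diff[OF integrable_p_mult_Y[OF j]])
      (use int in \<open>auto intro!: integrable_sum\<close>)
  also have "(\<integral>z. (\<Sum>l<k. p j (snd z) * p l (snd z) * ?b $ l) \<partial>L)
      = (\<Sum>l<k. (\<integral>z. p j (snd z) * p l (snd z) \<partial>L) * ?b $ l)"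
    using int by (simp add: Bochner_Integration.integral_sum)
  also have "\<dots> = (gram L k p *\<^sub>v ?b) $ j"
    using j normal_equations(1) by (simp add: gram_def scalar_prod_def atLeast0LessThan)
  also have "\<dots> = (\<integral>z. p j (snd z) * fst z \<partial>L)"
    using j normal_equations(2) by simp
  finally show ?thesis by simp
qed

lemma sqrt_trace_gram_le_xi:
  assumes support: "AE z in L. snd z \<in> Xs"
  shows "ereal (sqrt (trace_mat (gram L k p))) \<le> xi Xs k p"
proof -
  interpret prob_space L by (rule prob_space_L)
  define f where "f x = (\<Sum>j<k. (p j x)\<^sup>2)" for x
  have "ereal (sqrt (f x)) \<le> xi Xs k p" if "x \<in> Xs" for x
    using SUP_upper[OF that, of "\<lambda>x. ereal (vnorm2 (pvec k p x))"]
    by (simp add: xi_def vnorm2_def pvec_def f_def)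
  then have ae: "AE z in L. ereal (sqrt (f (snd z))) \<le> xi Xs k p"
    using support by auto
  show ?thesis
  proof (cases "xi Xs k p")
    case (real r)
    have "AE z in L. sqrt (f (snd z)) \<le> r" using ae by (simp add: real)
    then have "AE z in L. 0 \<le> r \<and> f (snd z) \<le> r\<^sup>2"
    proof eventually_elim
      case (elim z)
      have "0 \<le> sqrt (f (snd z))" by (simp add: f_def sum_nonneg)
      with elim sqrt_le_D[OF elim] show ?case by linarith
    qed
    then have r: "0 \<le> r" and ae_r: "AE z in L. f (snd z) \<le> r\<^sup>2" by auto
    have "trace_mat (gram L k p) = (\<integral>z. f (snd z) \<partial>L)"
      using integrable_p_mult_p
      by (simp add: trace_mat_gram f_def Bochner_Integration.integral_sum power2_eq_square)
    also have "\<dots> \<le> (\<integral>z. r\<^sup>2 \<partial>L)"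
      using integrable_p_mult_p ae_r
      by (intro integral_mono_AE) (auto simp: f_def power2_eq_square)
    finally show ?thesis using r by (simp add: real prob_space real_le_lsqrt)
  next
    case MInf
    then show ?thesis using ae by simp
  qed simp
qed

end

section \<open>The Rademacher-weighted sample\<close>

lemma vnorm2_vec_divide:
  "vnorm2 (vec k (\<lambda>j. g j / real n)) = sqrt (\<Sum>j<k. (g j)\<^sup>2) / real n"
  by (simp add: vnorm2_def power_divide sum_divide_distrib[symmetric] real_sqrt_divide)

lemma square_mult_le_if_less_sqrt_mult_max:
  fixes x A B :: real
  assumes less: "x < sqrt (real n) * max (sqrt A / real n) (sqrt B / real n)"
    and x: "0 \<le> x" and A: "0 \<le> A" and B: "0 \<le> B"
  shows "x\<^sup>2 * real n \<le> A + B"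
proof -
  define D where "D = max A B"
  have D: "0 \<le> D" "D \<le> A + B" using A B by (auto simp: D_def max_def)
  have "sqrt D = max (sqrt A) (sqrt B)" by (simp add: D_def max_def)
  then have "max (sqrt A / real n) (sqrt B / real n) = sqrt D / real n"
    by (simp add: max_divide_distrib_right)
  with less have less_D: "x < sqrt (real n) * (sqrt D / real n)" by simp
  then have n: "0 < real n" using x by (cases n) auto
  have "x\<^sup>2 < (sqrt (real n) * (sqrt D / real n))\<^sup>2"
    using x less_D by (intro power_strict_mono) auto
  also have "\<dots> = D / real n"
    using n D(1) by (simp add: power_mult_distrib power_divide) (simp add: field_simps power2_eq_square)
  finally show ?thesis using n D(2) by (simp add: pos_less_divide_eq)
qed

lemma exists_pos_divide_square_less:
  fixes a \<epsilon> :: real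
  assumes "0 < \<epsilon>"
  obtains C where "0 < C" and "a / C\<^sup>2 < \<epsilon>"
proof
  define C where "C = sqrt (\<bar>a\<bar> / \<epsilon>) + 1"
  have root: "0 \<le> sqrt (\<bar>a\<bar> / \<epsilon>)" using assms by simp
  then show C: "0 < C" unfolding C_def by linarith
  have "\<bar>a\<bar> / \<epsilon> = (sqrt (\<bar>a\<bar> / \<epsilon>))\<^sup>2" using assms by simp
  also have "\<dots> < C\<^sup>2" unfolding C_def using root by (intro power_strict_mono) auto
  finally have "\<bar>a\<bar> < C\<^sup>2 * \<epsilon>" using assms by (simp add: divide_less_eq)
  then show "a / C\<^sup>2 < \<epsilon>" using C by (simp add: divide_less_eq mult.commute)
qed

locale rademacher_sample = series_regression L Sx k p + prob_space M
  for L :: "(real \<times> 'x) measure" and Sx :: "'x measure" and k :: nat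
    and p :: "nat \<Rightarrow> 'x \<Rightarrow> real" and M :: "'a measure" +
  fixes n :: nat and Y :: "nat \<Rightarrow> 'a \<Rightarrow> real" and X :: "nat \<Rightarrow> 'a \<Rightarrow> 'x"
    and eta :: "nat \<Rightarrow> 'a \<Rightarrow> real"
  assumes data_measurable: "\<And>i. i < n \<Longrightarrow> (\<lambda>w. (Y i w, X i w)) \<in> measurable M (borel \<Otimes>\<^sub>M Sx)"
    and distr_data: "\<And>i. i < n \<Longrightarrow> distr M (borel \<Otimes>\<^sub>M Sx) (\<lambda>w. (Y i w, X i w)) = L"
    and eta_measurable: "\<And>i. i < n \<Longrightarrow> eta i \<in> borel_measurable M"
    and prob_eta_1: "\<And>i. i < n \<Longrightarrow> prob {w \<in> space M. eta i w = 1} = 1/2"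
    and prob_eta_minus_1: "\<And>i. i < n \<Longrightarrow> prob {w \<in> space M. eta i w = -1} = 1/2"
    and indep_observations: "indep_vars (\<lambda>i. (borel \<Otimes>\<^sub>M Sx) \<Otimes>\<^sub>M borel)
      (\<lambda>i w. ((Y i w, X i w), eta i w)) {..<n}"
    and distr_data_eta: "\<And>i. i < n \<Longrightarrow>
      distr M ((borel \<Otimes>\<^sub>M Sx) \<Otimes>\<^sub>M borel) (\<lambda>w. ((Y i w, X i w), eta i w))
        = L \<Otimes>\<^sub>M distr M borel (eta i)"
begin

definition omega_sample :: "nat \<Rightarrow> nat \<Rightarrow> 'a \<Rightarrow> real" where
  "omega_sample i j w = omega L k p (Y i w, X i w) $ j"

lemma
  fixes g :: "real \<times> 'x \<Rightarrow> real"
  assumes i: "i < n" and g: "g \<in> borel_measurable (borel \<Otimes>\<^sub>M Sx)"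
  shows integrable_data_iff: "integrable M (\<lambda>w. g (Y i w, X i w)) \<longleftrightarrow> integrable L g"
    and integral_data: "(\<integral>w. g (Y i w, X i w) \<partial>M) = (\<integral>z. g z \<partial>L)"
  using integrable_distr_eq[OF data_measurable[OF i] g] integral_distr[OF data_measurable[OF i] g]
  by (simp_all add: distr_data[OF i])

lemma omega_sample_measurable:
  "i < n \<Longrightarrow> j < k \<Longrightarrow> omega_sample i j \<in> borel_measurable M"
  using measurable_compose[OF data_measurable omega_index_measurable]
  by (simp add: omega_sample_def[abs_def])

lemma
  assumes i: "i < n" and j: "j < k"
  shows integrable_omega_sample: "integrable M (omega_sample i j)"
    and integrable_omega_sample_square: "integrable M (\<lambda>w. (omega_sample i j w)\<^sup>2)"
    and expectation_omega_sample: "expectation (omega_sample i j) = 0"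
    and expectation_omega_sample_square:
      "expectation (\<lambda>w. (omega_sample i j w)\<^sup>2) = (\<integral>z. (omega L k p z $ j)\<^sup>2 \<partial>L)"
proof -
  note omega = omega_index_measurable[OF j]
  have omega2: "(\<lambda>z. (omega L k p z $ j)\<^sup>2) \<in> borel_measurable (borel \<Otimes>\<^sub>M Sx)"
    using omega by measurable
  show "integrable M (omega_sample i j)"
    using integrable_data_iff[OF i omega] integrable_omega[OF j] by (simp add: omega_sample_def[abs_def])
  show "integrable M (\<lambda>w. (omega_sample i j w)\<^sup>2)"
    using integrable_data_iff[OF i omega2] integrable_omega_square[OF j]
    by (simp add: omega_sample_def[abs_def])
  show "expectation (omega_sample i j) = 0"
    using integral_data[OF i omega] integral_omega_eq_0[OF j] by (simp add: omega_sample_def[abs_def])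
  show "expectation (\<lambda>w. (omega_sample i j w)\<^sup>2) = (\<integral>z. (omega L k p z $ j)\<^sup>2 \<partial>L)"
    using integral_data[OF i omega2] by (simp add: omega_sample_def[abs_def])
qed

lemma AE_eta: "i < n \<Longrightarrow> AE w in M. eta i w = 1 \<or> eta i w = -1"
  by (rule AE_rademacher[OF eta_measurable prob_eta_1 prob_eta_minus_1])

lemma
  assumes i: "i < n" and j: "j < k"
  shows integrable_omega_sample_mult_eta: "integrable M (\<lambda>w. omega_sample i j w * eta i w)"
    and expectation_omega_sample_mult_eta: "expectation (\<lambda>w. omega_sample i j w * eta i w) = 0"
proof -
  let ?N = "(borel \<Otimes>\<^sub>M Sx) \<Otimes>\<^sub>M (borel :: real measure)"
  let ?obs = "\<lambda>w. ((Y i w, X i w), eta i w)"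
  let ?\<nu> = "distr M borel (eta i)"
  \<comment> \<open>indep_var needs both variables to take values in the same space, so the independence
    of data and multiplier is used through their product law and Fubini.\<close>
  interpret L: prob_space L by (rule prob_space_L)
  interpret \<nu>: prob_space ?\<nu> by (rule prob_space_distr[OF eta_measurable[OF i]])
  interpret L\<nu>: pair_prob_space L ?\<nu> by unfold_locales
  have obs: "?obs \<in> measurable M ?N"
    using data_measurable[OF i] eta_measurable[OF i] by (rule measurable_Pair)
  have h: "(\<lambda>u. omega L k p (fst u) $ j * snd u) \<in> borel_measurable ?N"
    using omega_index_measurable[OF j] by measurable
  show int: "integrable M (\<lambda>w. omega_sample i j w * eta i w)"
    by (rule Bochner_Integration.integrable_bound[OF integrable_omega_sample[OF i j]])
      (use omega_sample_measurable[OF i j] eta_measurable[OF i] AE_eta[OF i]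
        in \<open>auto elim!: eventually_mono simp: abs_mult\<close>)
  then have int_prod: "integrable (L \<Otimes>\<^sub>M ?\<nu>) (\<lambda>u. omega L k p (fst u) $ j * snd u)"
    using integrable_distr_eq[OF obs h] distr_data_eta[OF i] by (simp add: omega_sample_def)
  have "expectation (\<lambda>w. omega_sample i j w * eta i w)
      = (\<integral>u. omega L k p (fst u) $ j * snd u \<partial>(L \<Otimes>\<^sub>M ?\<nu>))"
    using integral_distr[OF obs h] distr_data_eta[OF i] by (simp add: omega_sample_def)
  also have "\<dots> = (\<integral>z. (\<integral>e. omega L k p z $ j * e \<partial>?\<nu>) \<partial>L)"
    using L\<nu>.integral_fst'[OF int_prod] by simp
  also have "\<dots> = (\<integral>z. omega L k p z $ j \<partial>L) * (\<integral>e. e \<partial>?\<nu>)"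
    by simp
  also have "\<dots> = 0"
    by (simp add: integral_omega_eq_0[OF j])
  finally show "expectation (\<lambda>w. omega_sample i j w * eta i w) = 0" .
qed

lemma
  assumes i: "i < n" and j: "j < k"
  shows integrable_weighted_omega_sample:
      "integrable M (\<lambda>w. (eta i w + 1) * omega_sample i j w)"
    and expectation_weighted_omega_sample:
      "expectation (\<lambda>w. (eta i w + 1) * omega_sample i j w) = 0"
    and integrable_weighted_omega_sample_square:
      "integrable M (\<lambda>w. ((eta i w + 1) * omega_sample i j w)\<^sup>2)"
    and expectation_weighted_omega_sample_square:
      "expectation (\<lambda>w. ((eta i w + 1) * omega_sample i j w)\<^sup>2)
         \<le> 4 * (\<integral>z. (omega L k p z $ j)\<^sup>2 \<partial>L)"
proof -
  note W = integrable_omega_sample[OF i j] integrable_omega_sample_square[OF i j]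
  show "integrable M (\<lambda>w. (eta i w + 1) * omega_sample i j w)"
    using integrable_omega_sample_mult_eta[OF i j] W(1) by (simp add: distrib_right mult.commute)
  have "expectation (\<lambda>w. (eta i w + 1) * omega_sample i j w)
      = expectation (\<lambda>w. omega_sample i j w * eta i w) + expectation (omega_sample i j)"
    using integrable_omega_sample_mult_eta[OF i j] W(1)
    by (simp add: distrib_right mult.commute)
  also have "\<dots> = 0"
    by (simp add: expectation_omega_sample_mult_eta[OF i j] expectation_omega_sample[OF i j])
  finally show "expectation (\<lambda>w. (eta i w + 1) * omega_sample i j w) = 0" .
  have bound: "AE w in M. ((eta i w + 1) * omega_sample i j w)\<^sup>2 \<le> 4 * (omega_sample i j w)\<^sup>2"
    using AE_eta[OF i] by eventually_elim (auto simp: power_mult_distrib)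
  have meas: "(\<lambda>w. ((eta i w + 1) * omega_sample i j w)\<^sup>2) \<in> borel_measurable M"
    using eta_measurable[OF i] omega_sample_measurable[OF i j] by measurable
  show int: "integrable M (\<lambda>w. ((eta i w + 1) * omega_sample i j w)\<^sup>2)"
    by (rule Bochner_Integration.integrable_bound[of _ "\<lambda>w. 4 * (omega_sample i j w)\<^sup>2"])
      (use W(2) meas bound in \<open>auto elim!: eventually_mono\<close>)
  have "expectation (\<lambda>w. ((eta i w + 1) * omega_sample i j w)\<^sup>2)
      \<le> expectation (\<lambda>w. 4 * (omega_sample i j w)\<^sup>2)"
    by (rule integral_mono_AE[OF int _ bound]) (use W(2) in simp)
  then show "expectation (\<lambda>w. ((eta i w + 1) * omega_sample i j w)\<^sup>2)
      \<le> 4 * (\<integral>z. (omega L k p z $ j)\<^sup>2 \<partial>L)"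
    by (simp add: expectation_omega_sample_square[OF i j])
qed

lemma indep_var_observations:
  assumes "i < n" "l < n" "i \<noteq> l" and h: "h \<in> borel_measurable ((borel \<Otimes>\<^sub>M Sx) \<Otimes>\<^sub>M borel)"
  shows "indep_var borel (\<lambda>w. h ((Y i w, X i w), eta i w)) borel (\<lambda>w. h ((Y l w, X l w), eta l w))"
  using indep_var_compose_indep_vars[OF indep_observations _ _ _ h] assms by simp

lemma has_bochner_integral_square_sum_omega_sample:
  assumes j: "j < k"
  shows "has_bochner_integral M (\<lambda>w. (\<Sum>i<n. omega_sample i j w)\<^sup>2)
    (real n * (\<integral>z. (omega L k p z $ j)\<^sup>2 \<partial>L))"
proof -
  have "has_bochner_integral M (\<lambda>w. (\<Sum>i<n. omega_sample i j w)\<^sup>2)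
      (\<Sum>i<n. expectation (\<lambda>w. (omega_sample i j w)\<^sup>2))"
  proof (rule has_bochner_integral_square_sum_pairwise_indep)
    fix i l assume "i \<in> {..<n}" "l \<in> {..<n}" "i \<noteq> l"
    then show "indep_var borel (omega_sample i j) borel (omega_sample l j)"
      using indep_var_observations[of i l "\<lambda>u. omega L k p (fst u) $ j"] omega_index_measurable[OF j]
      by (simp add: omega_sample_def[abs_def])
  qed (use j integrable_omega_sample integrable_omega_sample_square expectation_omega_sample in auto)
  then show ?thesis using j by (simp add: expectation_omega_sample_square)
qed

lemma
  assumes j: "j < k"
  shows integrable_square_sum_weighted_omega_sample:
      "integrable M (\<lambda>w. (\<Sum>i<n. (eta i w + 1) * omega_sample i j w)\<^sup>2)"
    and expectation_square_sum_weighted_omega_sample_le: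
      "expectation (\<lambda>w. (\<Sum>i<n. (eta i w + 1) * omega_sample i j w)\<^sup>2)
         \<le> 4 * real n * (\<integral>z. (omega L k p z $ j)\<^sup>2 \<partial>L)"
proof -
  have sum: "has_bochner_integral M (\<lambda>w. (\<Sum>i<n. (eta i w + 1) * omega_sample i j w)\<^sup>2)
      (\<Sum>i<n. expectation (\<lambda>w. ((eta i w + 1) * omega_sample i j w)\<^sup>2))"
  proof (rule has_bochner_integral_square_sum_pairwise_indep)
    fix i l assume "i \<in> {..<n}" "l \<in> {..<n}" "i \<noteq> l"
    then show "indep_var borel (\<lambda>w. (eta i w + 1) * omega_sample i j w)
        borel (\<lambda>w. (eta l w + 1) * omega_sample l j w)"
      using indep_var_observations[of i l "\<lambda>u. (snd u + 1) * omega L k p (fst u) $ j"]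
        omega_index_measurable[OF j]
      by (simp add: omega_sample_def measurable_compose[OF measurable_fst])
  qed (use j integrable_weighted_omega_sample integrable_weighted_omega_sample_square
      expectation_weighted_omega_sample in auto)
  then show "integrable M (\<lambda>w. (\<Sum>i<n. (eta i w + 1) * omega_sample i j w)\<^sup>2)"
    by (simp add: has_bochner_integral_iff)
  from sum have eq: "expectation (\<lambda>w. (\<Sum>i<n. (eta i w + 1) * omega_sample i j w)\<^sup>2)
      = (\<Sum>i<n. expectation (\<lambda>w. ((eta i w + 1) * omega_sample i j w)\<^sup>2))"
    by (simp add: has_bochner_integral_iff)
  have "(\<Sum>i<n. expectation (\<lambda>w. ((eta i w + 1) * omega_sample i j w)\<^sup>2))
      \<le> (\<Sum>i<n. 4 * (\<integral>z. (omega L k p z $ j)\<^sup>2 \<partial>L))"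
    by (intro sum_mono expectation_weighted_omega_sample_square[OF _ j]) simp
  with eq show "expectation (\<lambda>w. (\<Sum>i<n. (eta i w + 1) * omega_sample i j w)\<^sup>2)
      \<le> 4 * real n * (\<integral>z. (omega L k p z $ j)\<^sup>2 \<partial>L)"
    by simp
qed

definition squared_norms_of_sums :: "'a \<Rightarrow> real" where
  "squared_norms_of_sums w = (\<Sum>j<k. (\<Sum>i<n. (eta i w + 1) * omega_sample i j w)\<^sup>2)
     + (\<Sum>j<k. (\<Sum>i<n. omega_sample i j w)\<^sup>2)"

lemma
  shows integrable_squared_norms_of_sums: "integrable M squared_norms_of_sums"
    and expectation_squared_norms_of_sums_le:
      "expectation squared_norms_of_sums \<le> 5 * real n * trace_mat (Omega L k p)"
proof -
  note V = integrable_square_sum_weighted_omega_sample expectation_square_sum_weighted_omega_sample_le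
  note W = has_bochner_integral_square_sum_omega_sample[unfolded has_bochner_integral_iff]
  have int_V: "integrable M (\<lambda>w. \<Sum>j<k. (\<Sum>i<n. (eta i w + 1) * omega_sample i j w)\<^sup>2)"
    using V(1) by (auto intro!: Bochner_Integration.integrable_sum)
  have int_W: "integrable M (\<lambda>w. \<Sum>j<k. (\<Sum>i<n. omega_sample i j w)\<^sup>2)"
    using W by (auto intro!: Bochner_Integration.integrable_sum)
  show "integrable M squared_norms_of_sums"
    unfolding squared_norms_of_sums_def[abs_def] using int_V int_W
    by (rule Bochner_Integration.integrable_add)
  have "expectation squared_norms_of_sums
      = (\<Sum>j<k. expectation (\<lambda>w. (\<Sum>i<n. (eta i w + 1) * omega_sample i j w)\<^sup>2))
        + (\<Sum>j<k. expectation (\<lambda>w. (\<Sum>i<n. omega_sample i j w)\<^sup>2))"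
    unfolding squared_norms_of_sums_def[abs_def] Bochner_Integration.integral_add[OF int_V int_W]
    using V(1) W by (simp add: Bochner_Integration.integral_sum)
  also have "\<dots> \<le> (\<Sum>j<k. 4 * real n * (\<integral>z. (omega L k p z $ j)\<^sup>2 \<partial>L))
      + (\<Sum>j<k. real n * (\<integral>z. (omega L k p z $ j)\<^sup>2 \<partial>L))"
    using V(2) W by (intro add_mono sum_mono) auto
  also have "\<dots> = 5 * real n * trace_mat (Omega L k p)"
    by (simp add: trace_mat_Omega sum_distrib_left[symmetric] algebra_simps)
  finally show "expectation squared_norms_of_sums \<le> 5 * real n * trace_mat (Omega L k p)" .
qed

lemma prob_scaled_sample_means_gt_le:
  assumes n: "0 < n" and C: "0 < C" and support: "AE z in L. snd z \<in> Xs"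
    and G: "0 < trace_mat (gram L k p)"
  shows "prob {w \<in> space M. ereal C * xi Xs k p <
      ereal (sqrt (real n) *
        max (vnorm2 (vec k (\<lambda>j. (\<Sum>i<n. (eta i w + 1) * omega L k p (Y i w, X i w) $ j) / real n)))
            (vnorm2 (vec k (\<lambda>j. (\<Sum>i<n. omega L k p (Y i w, X i w) $ j) / real n))))}
    \<le> 5 * (trace_mat (Omega L k p) / trace_mat (gram L k p)) / C\<^sup>2"
    (is "prob ?E \<le> _")
proof -
  define t where "t = C\<^sup>2 * trace_mat (gram L k p) * real n"
  have t: "0 < t" using C G n by (simp add: t_def)
  let ?F = squared_norms_of_sums
  note int_F = integrable_squared_norms_of_sums
  have "?E \<subseteq> {w \<in> space M. t \<le> ?F w}"
  proof safe
    fix w assume "w \<in> space M" and less: "ereal C * xi Xs k p <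
      ereal (sqrt (real n) *
        max (vnorm2 (vec k (\<lambda>j. (\<Sum>i<n. (eta i w + 1) * omega L k p (Y i w, X i w) $ j) / real n)))
            (vnorm2 (vec k (\<lambda>j. (\<Sum>i<n. omega L k p (Y i w, X i w) $ j) / real n))))"
    have "ereal (C * sqrt (trace_mat (gram L k p))) \<le> ereal C * xi Xs k p"
      using ereal_mult_left_mono[OF sqrt_trace_gram_le_xi[OF support], of "ereal C"] C by simp
    from order_le_less_trans[OF this less] have "C * sqrt (trace_mat (gram L k p)) < sqrt (real n) *
        max (sqrt (\<Sum>j<k. (\<Sum>i<n. (eta i w + 1) * omega_sample i j w)\<^sup>2) / real n)
            (sqrt (\<Sum>j<k. (\<Sum>i<n. omega_sample i j w)\<^sup>2) / real n)"
      by (simp add: vnorm2_vec_divide omega_sample_def)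
    then have "(C * sqrt (trace_mat (gram L k p)))\<^sup>2 * real n \<le> ?F w"
      unfolding squared_norms_of_sums_def
      by (rule square_mult_le_if_less_sqrt_mult_max) (use C G in \<open>auto intro: sum_nonneg\<close>)
    then show "t \<le> ?F w" using G by (simp add: t_def power_mult_distrib)
  qed
  then have "prob ?E \<le> prob {w \<in> space M. t \<le> ?F w}"
    using borel_measurable_integrable[OF int_F] by (intro finite_measure_mono) measurable
  also have "\<dots> \<le> expectation ?F / t"
    by (rule integral_Markov_inequality_measure[OF int_F _ _ t])
      (auto simp: squared_norms_of_sums_def intro!: add_nonneg_nonneg sum_nonneg)
  also have "\<dots> \<le> 5 * real n * trace_mat (Omega L k p) / t"
    using expectation_squared_norms_of_sums_le t by (simp add: divide_right_mono)
  also have "\<dots> = 5 * (trace_mat (Omega L k p) / trace_mat (gram L k p)) / C\<^sup>2"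
    using n by (simp add: t_def)
  finally show ?thesis .
qed

end

theorem lemma2:
  fixes M :: "nat \<Rightarrow> 'a measure"
    and Sx :: "'x measure"
    and L :: "nat \<Rightarrow> (real \<times> 'x) measure"
    and Xs :: "nat \<Rightarrow> 'x set"
    and k :: "nat \<Rightarrow> nat"
    and p :: "nat \<Rightarrow> nat \<Rightarrow> 'x \<Rightarrow> real"
    and Y :: "nat \<Rightarrow> nat \<Rightarrow> 'a \<Rightarrow> real"
    and X :: "nat \<Rightarrow> nat \<Rightarrow> 'a \<Rightarrow> 'x"
    and eta :: "nat \<Rightarrow> nat \<Rightarrow> 'a \<Rightarrow> real"
    and b q :: real
    and B :: "nat \<Rightarrow> real"
  assumes prob: "\<And>n. prob_space (M n)"
    and data_meas: "\<And>n i. i < n \<Longrightarrow> (\<lambda>w. (Y n i w, X n i w)) \<in> measurable (M n) (borel \<Otimes>\<^sub>M Sx)"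
    and data_law: "\<And>n i. i < n \<Longrightarrow> distr (M n) (borel \<Otimes>\<^sub>M Sx) (\<lambda>w. (Y n i w, X n i w)) = L n"
    and eta_meas: "\<And>n i. i < n \<Longrightarrow> eta n i \<in> borel_measurable (M n)"
    and eta_rad1: "\<And>n i. i < n \<Longrightarrow> measure (M n) {w \<in> space (M n). eta n i w = 1} = 1/2"
    and eta_rad2: "\<And>n i. i < n \<Longrightarrow> measure (M n) {w \<in> space (M n). eta n i w = -1} = 1/2"
    and indep_obs: "\<And>n. prob_space.indep_vars (M n) (\<lambda>i. (borel \<Otimes>\<^sub>M Sx) \<Otimes>\<^sub>M borel)
                      (\<lambda>i w. ((Y n i w, X n i w), eta n i w)) {..<n}"
    and indep_eta: "\<And>n i. i < n \<Longrightarrow>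
                      distr (M n) ((borel \<Otimes>\<^sub>M Sx) \<Otimes>\<^sub>M borel) (\<lambda>w. ((Y n i w, X n i w), eta n i w))
                      = L n \<Otimes>\<^sub>M distr (M n) borel (eta n i)"
    and support: "\<And>n. AE z in L n. snd z \<in> Xs n"
    and k2: "\<And>n. k n \<ge> 2"
    and p_meas: "\<And>n j. j < k n \<Longrightarrow> p n j \<in> borel_measurable Sx"
    and int_pp: "\<And>n j l. j < k n \<Longrightarrow> l < k n \<Longrightarrow>
                   integrable (L n) (\<lambda>z. p n j (snd z) * p n l (snd z))"
    and int_ww: "\<And>n j l. j < k n \<Longrightarrow> l < k n \<Longrightarrow>
                   integrable (L n) (\<lambda>z. vec_index (omega (L n) (k n) (p n) z) j
                                        * vec_index (omega (L n) (k n) (p n) z) l)"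
    and eig_a: "\<exists>c C. 0 < c \<and> (\<forall>n e. (eigenvalue (Omega (L n) (k n) (p n)) e
                                        \<or> eigenvalue (gram (L n) (k n) (p n)) e)
                                       \<longrightarrow> c \<le> e \<and> e \<le> C)"
    and b_pos: "b > 0"
    and q_ge: "q \<ge> 4"
    and B_ge: "\<And>n. B n \<ge> 1"
    and Y2: "\<And>n. integrable (L n) (\<lambda>z. (fst z)\<^sup>2)"
    and mom_low: "\<And>n j. j < k n \<Longrightarrow>
        (\<integral>\<^sup>+ z. ennreal ((row (inv_sqrt_mat (Omega (L n) (k n) (p n))) j
                              \<bullet> omega (L n) (k n) (p n) z)\<^sup>2) \<partial>L n) \<ge> ennreal b"
    and mom_up: "\<And>n j \<kappa>. j < k n \<Longrightarrow> \<kappa> \<in> {1, 2} \<Longrightarrow>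
        (\<integral>\<^sup>+ z. ennreal (\<bar>row (inv_sqrt_mat (Omega (L n) (k n) (p n))) j
                              \<bullet> omega (L n) (k n) (p n) z\<bar> ^ (2 + \<kappa>)) \<partial>L n) \<le> ennreal (B n ^ \<kappa>)"
    and mom_q: "\<And>n. (\<integral>\<^sup>+ z. ennreal ((Max ((\<lambda>j. \<bar>row (inv_sqrt_mat (Omega (L n) (k n) (p n))) j
                              \<bullet> omega (L n) (k n) (p n) z\<bar>) ` {..<k n})) powr q) \<partial>L n)
                   \<le> ennreal (B n powr q)"
    and rate1: "(\<lambda>n. (B n)\<^sup>2 * (ln (real (n * k n))) ^ 7 / real n) \<longlonglongrightarrow> 0"
    and rate2: "(\<lambda>n. (B n)\<^sup>2 * (ln (real (n * k n))) ^ 3 / real n powr (1 - 2 / q)) \<longlonglongrightarrow> 0"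
  shows "\<forall>\<epsilon>>0. \<exists>C>0. \<exists>N. \<forall>n\<ge>N.
           measure (M n) {w \<in> space (M n).
             ereal C * xi (Xs n) (k n) (p n) <
             ereal (sqrt (real n) *
               max (vnorm2 (vec (k n) (\<lambda>j. (\<Sum>i<n. (eta n i w + 1)
                          * vec_index (omega (L n) (k n) (p n) (Y n i w, X n i w)) j) / real n)))
                   (vnorm2 (vec (k n) (\<lambda>j. (\<Sum>i<n.
                          vec_index (omega (L n) (k n) (p n) (Y n i w, X n i w)) j) / real n))))}
           < \<epsilon>"
proof -
  obtain c c' where c: "0 < c" and eig: "\<And>n e. eigenvalue (Omega (L n) (k n) (p n)) e
      \<or> eigenvalue (gram (L n) (k n) (p n)) e \<Longrightarrow> c \<le> e \<and> e \<le> c'"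
    using eig_a by blast
  define event where "event C n = {w \<in> space (M n).
      ereal C * xi (Xs n) (k n) (p n) <
      ereal (sqrt (real n) *
        max (vnorm2 (vec (k n) (\<lambda>j. (\<Sum>i<n. (eta n i w + 1)
                   * omega (L n) (k n) (p n) (Y n i w, X n i w) $ j) / real n)))
            (vnorm2 (vec (k n) (\<lambda>j. (\<Sum>i<n.
                   omega (L n) (k n) (p n) (Y n i w, X n i w) $ j) / real n))))}" for C n
  have bound: "measure (M n) (event C n) \<le> 5 * (c' / c) / C\<^sup>2" if n: "1 \<le> n" and C: "0 < C" for n C
  proof -
    have L: "L n = distr (M n) (borel \<Otimes>\<^sub>M Sx) (\<lambda>w. (Y n 0 w, X n 0 w))"
      using data_law[of 0 n] n by simp
    have "prob_space (L n)"
      unfolding L using prob_space.prob_space_distr[OF prob data_meas[of 0 n]] n by simp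
    then have "series_regression (L n) Sx (k n) (p n)"
    proof (rule series_regression.intro)
      show "sets (L n) = sets (borel \<Otimes>\<^sub>M Sx)" unfolding L by simp
      show "\<not> eigenvalue (gram (L n) (k n) (p n)) 0" using eig[of n 0] c by auto
      show "integrable (L n) (\<lambda>z. (omega (L n) (k n) (p n) z $ j)\<^sup>2)" if "j < k n" for j
        using int_ww[OF that that] by (simp add: power2_eq_square)
    qed (use p_meas int_pp Y2 in auto)
    then interpret rademacher_sample "L n" Sx "k n" "p n" "M n" n "Y n" "X n" "eta n"
      by (intro rademacher_sample.intro rademacher_sample_axioms.intro prob)
        (use data_meas data_law eta_meas eta_rad1 eta_rad2 indep_obs indep_eta in auto)
    have k: "0 < k n" using k2[of n] by simp
    note ratio = trace_mat_Omega_divide_gram_le[where L = "L n" and p = "p n", OF k c eig[of n]]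
    have "measure (M n) (event C n)
        \<le> 5 * (trace_mat (Omega (L n) (k n) (p n)) / trace_mat (gram (L n) (k n) (p n))) / C\<^sup>2"
      unfolding event_def using n C support ratio(1) by (intro prob_scaled_sample_means_gt_le) auto
    also have "\<dots> \<le> 5 * (c' / c) / C\<^sup>2"
      using ratio(2) by (intro divide_right_mono mult_left_mono) auto
    finally show ?thesis .
  qed
  have "\<forall>\<epsilon>>0. \<exists>C>0. \<exists>N. \<forall>n\<ge>N. measure (M n) (event C n) < \<epsilon>"
  proof (intro allI impI)
    fix \<epsilon> :: real assume "0 < \<epsilon>"
    then obtain C where "0 < C" and "5 * (c' / c) / C\<^sup>2 < \<epsilon>"
      by (rule exists_pos_divide_square_less)
    with bound show "\<exists>C>0. \<exists>N. \<forall>n\<ge>N. measure (M n) (event C n) < \<epsilon>"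
      by (intro exI[of _ C] conjI exI[of _ 1] allI impI) (auto intro: le_less_trans)
  qed
  then show ?thesis unfolding event_def .
qed

end
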